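(* Let $n\ge2$ be even and define $Q:\mathbb{F}_{2^n}\to\mathbb{F}_2$ by $$Q(x)=\sum_{i=1}^{n/2-1}Tr_1^n\!\left(x^{2^i+1}\right)+Tr_1^{n/2}\!\left(x^{2^{n/2}+1}\right).$$ Let $f:\mathbb{F}_{2^n}\to\mathbb{F}_2$. Then (1) if $f$ is bent then $f+Q$ is negabent; (2) if $f$ is negabent then $f+Q$ is bent.
   Context: $Tr_1^m(z)=z+z^2+\dots+z^{2^{m-1}}$ (for $m\mid n$, a map $\mathbb{F}_{2^m}\to\mathbb{F}_2$; note $x^{2^{n/2}+1}\in\mathbb{F}_{2^{n/2}}$); write $Tr=Tr_1^n$. Fix a self-dual basis $\{\alpha_i\}$ of $\mathbb{F}_{2^n}$ over $\mathbb{F}_2$ ($Tr(\alpha_i\alpha_j)=\delta_{ij}$), identify $\mathbb{F}_{2^n}$ with $\mathbb{F}_2^n$ via coordinates, and let $wt(x)$ be the number of nonzero coordinates. For $g:\mathbb{F}_{2^n}\to\mathbb{F}_2$: $g$ is bent if $\left|\sum_x(-1)^{g(x)+Tr(\mu x)}\right|=2^{n/2}$ for all $\mu$; $g$ is negabent if $\left|\sum_x(-1)^{g(x)+Tr(\mu x)}\mathrm{i}^{wt(x)}\right|=2^{n/2}$ for all $\mu$ ($\mathrm{i}=\sqrt{-1}$). *)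

theory Defs
  imports Complex_Main
begin

text \<open>The field F_(2^n) is modelled as a finite field type 'a with CARD('a) = 2^n.
  Elements of F_2 are represented as bool (True = 1); for elements z of the prime
  subfield {0,1} of 'a, bitval z = (z \<noteq> 0).\<close>

definition tr :: "nat \<Rightarrow> 'a::field \<Rightarrow> 'a" where
  "tr m z = (\<Sum>k<m. z ^ (2 ^ k))"

definition bitval :: "'a::field \<Rightarrow> bool" where
  "bitval z = (z \<noteq> 0)"

definition self_dual_basis :: "nat \<Rightarrow> (nat \<Rightarrow> 'a::field) \<Rightarrow> bool" where
  "self_dual_basis n \<alpha> = (\<forall>i<n. \<forall>j<n. tr n (\<alpha> i * \<alpha> j) = (if i = j then 1 else 0))"

text \<open>Coordinates w.r.t. a self-dual basis are x_i = Tr(alpha_i x).\<close>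
definition wt :: "nat \<Rightarrow> (nat \<Rightarrow> 'a::field) \<Rightarrow> 'a \<Rightarrow> nat" where
  "wt n \<alpha> x = card {i. i < n \<and> tr n (\<alpha> i * x) \<noteq> 0}"

definition sgn2 :: "bool \<Rightarrow> complex" where
  "sgn2 b = (if b then -1 else 1)"

definition bent :: "nat \<Rightarrow> ('a::{field,finite} \<Rightarrow> bool) \<Rightarrow> bool" where
  "bent n g = (\<forall>\<mu>::'a. cmod (\<Sum>x\<in>UNIV. sgn2 (g x \<noteq> bitval (tr n (\<mu> * x))))
                 = 2 ^ (n div 2))"

definition negabent :: "nat \<Rightarrow> (nat \<Rightarrow> 'a::{field,finite}) \<Rightarrow> ('a \<Rightarrow> bool) \<Rightarrow> bool" where
  "negabent n \<alpha> g = (\<forall>\<mu>::'a. cmod (\<Sum>x\<in>UNIV. sgn2 (g x \<noteq> bitval (tr n (\<mu> * x)))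
                                      * \<i> ^ (wt n \<alpha> x))
                 = 2 ^ (n div 2))"

definition Qfun :: "nat \<Rightarrow> 'a::field \<Rightarrow> bool" where
  "Qfun n x = bitval ((\<Sum>i\<in>{1..<n div 2}. tr n (x ^ (2 ^ i + 1)))
                       + tr (n div 2) (x ^ (2 ^ (n div 2) + 1)))"

end

theory Submission
  imports Defs "HOL-Number_Theory.Residues" "HOL-Decision_Procs.Algebra_Aux"
begin

(* The polar form of Q is
   Q(x + y) + Q(x) + Q(y) = Tr(x) Tr(y) + Tr(x y), which is 1 on any two distinct basis vectors,
   because Tr(alpha_i) = Tr(alpha_i^2) = 1. Hence Q(x) = Tr(lin_part x) + binomial(wt x, 2) mod 2 for
   a fixed lin_part, while Tr(all_ones x) = wt x mod 2 for all_ones the sum of the basis. Since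
   i^w = (-1)^binomial(w, 2) ((1 + i)/2 + (1 - i)/2 (-1)^w), the nega-Hadamard transform of h at mu
   equals (1 + i)/2 a + (1 - i)/2 b, where a and b are the Walsh transform values of h + Q at
   mu + lin_part and mu + lin_part + all_ones. Its modulus is 2^(n/2) iff a^2 + b^2 = 2^(n+1), which
   for integers a and b means |a| = |b| = 2^(n/2). Taking h = f + Q gives the first implication,
   taking h = f the second. *)

section \<open>Characteristic two\<close>

lemma add_self_CHAR_2:
  assumes "CHAR('a::ring_1) = 2"
  shows "x + x = (0 :: 'a)"
  using uminus_CHAR_2[OF assms, of x] by (metis add.right_inverse)

lemma of_nat_CHAR_2:
  assumes "CHAR('a::ring_1) = 2"
  shows "(of_nat k :: 'a) = (if even k then 0 else 1)"
  by (induction k) (simp_all add: add_self_CHAR_2[OF assms])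

lemma power_two_power_add_CHAR_2:
  assumes "CHAR('a::comm_semiring_1) = 2"
  shows "(x + y :: 'a) ^ 2 ^ k = x ^ 2 ^ k + y ^ 2 ^ k"
  by (rule freshmans_dream') (simp_all add: assms)

lemma power_two_power_sum_CHAR_2:
  assumes "CHAR('a::comm_semiring_1) = 2"
  shows "(\<Sum>i\<in>A. f i :: 'a) ^ 2 ^ k = (\<Sum>i\<in>A. f i ^ 2 ^ k)"
  by (rule freshmans_dream_sum') (simp_all add: assms)

lemma square_eq_self_iff: "(z :: 'a::idom) ^ 2 = z \<longleftrightarrow> z \<in> {0, 1}"
proof -
  have "z ^ 2 = z \<longleftrightarrow> z * (z - 1) = 0"
    by (simp add: power2_eq_square algebra_simps)
  then show ?thesis by auto
qed

lemma zero_one_add_closed_CHAR_2: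
  assumes "CHAR('a::ring_1) = 2" and "a \<in> {0, 1 :: 'a}" and "b \<in> {0, 1}"
  shows "a + b \<in> {0, 1}"
  using assms add_self_CHAR_2[OF assms(1), of 1] by auto

lemma zero_one_sum_closed_CHAR_2:
  assumes "CHAR('a::ring_1) = 2" and "\<And>i. i \<in> A \<Longrightarrow> f i \<in> {0, 1 :: 'a}"
  shows "(\<Sum>i\<in>A. f i) \<in> {0, 1}"
  using assms(2)
proof (induction A rule: infinite_finite_induct)
  case (insert x F)
  then show ?case
    using zero_one_add_closed_CHAR_2[OF assms(1), of "f x" "sum f F"] by simp
qed simp_all

lemma bitval_add_CHAR_2:
  assumes "CHAR('a::field) = 2" and "a \<in> {0, 1 :: 'a}" and "b \<in> {0, 1}"
  shows "bitval (a + b) \<longleftrightarrow> bitval a \<noteq> bitval b"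
  using assms add_self_CHAR_2[OF assms(1), of 1] by (auto simp: bitval_def)

lemma bitval_of_nat_CHAR_2:
  assumes "CHAR('a::field) = 2"
  shows "bitval (of_nat k :: 'a) \<longleftrightarrow> odd k"
  by (simp add: bitval_def of_nat_CHAR_2[OF assms])

(* The library proves x ^ card UNIV = x only for the class finite_field; for a type of class
   {field, finite} we use Lagrange's theorem in the unit group of the ring cring_class_ops. *)
lemma Units_cring_class_ops_field: "Units (cring_class_ops :: 'a::field ring) = - {0}"
proof -
  have "\<exists>y \<in> carrier cring_class_ops. y * x = 1 \<and> x * y = 1" if "x \<noteq> 0" for x :: 'a
    using that by (intro bexI[of _ "inverse x"]) (simp_all add: carrier_class)
  then show ?thesis
    by (auto simp: Units_def class_simps)
qed

lemma power_card_UNIV_eq_self: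
  fixes x :: "'a::{field,finite}"
  shows "x ^ card (UNIV :: 'a set) = x"
proof (cases "x = 0")
  case False
  have "x ^ card (- {0::'a}) = 1"
    using cring_class.units_power_order_eq_one[of x] False
    by (simp add: Units_cring_class_ops_field)
  moreover have "card (UNIV :: 'a set) = Suc (card (- {0::'a}))"
    by (metis Compl_eq_Diff_UNIV card_Suc_Diff1 finite_UNIV iso_tuple_UNIV_I)
  ultimately show ?thesis by simp
qed (simp add: power_0_left)

section \<open>The trace\<close>

lemma tr_0 [simp]: "tr k 0 = 0"
  by (simp add: tr_def power_0_left)

lemma tr_add_CHAR_2:
  assumes "CHAR('a::field) = 2"
  shows "tr k (x + y :: 'a) = tr k x + tr k y"
  by (simp add: tr_def power_two_power_add_CHAR_2[OF assms] sum.distrib)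

lemma tr_sum_CHAR_2:
  assumes "CHAR('a::field) = 2"
  shows "tr k (\<Sum>i\<in>A. f i :: 'a) = (\<Sum>i\<in>A. tr k (f i))"
  by (induction A rule: infinite_finite_induct) (simp_all add: tr_add_CHAR_2[OF assms])

lemma tr_mult_zero_one:
  assumes "c \<in> {0, 1}"
  shows "tr k (c * z) = c * tr k z"
  using assms by (auto simp: tr_def power_0_left)

lemma tr_power_two_power_CHAR_2:
  assumes "CHAR('a::field) = 2"
  shows "tr k (z :: 'a) ^ 2 ^ j = tr k (z ^ 2 ^ j)"
  by (simp add: tr_def power_two_power_sum_CHAR_2[OF assms] flip: power_mult)
    (simp add: mult.commute)

lemma tr_square_add: "tr k (z ^ 2) + z = tr k z + z ^ 2 ^ k"
proof -
  have "tr k (z ^ 2) + z = (\<Sum>i<Suc k. z ^ 2 ^ i)"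
    unfolding sum.lessThan_Suc_shift
    by (simp add: tr_def power_mult[symmetric] mult.commute add.commute)
  also have "\<dots> = tr k z + z ^ 2 ^ k"
    by (simp add: tr_def)
  finally show ?thesis .
qed

lemma tr_add_exponent: "tr (a + b) z = tr a z + tr b (z ^ 2 ^ a)"
  by (induction b) (simp_all add: tr_def power_add power_mult add.assoc)

lemma tr_zero_one_if_fixed_CHAR_2:
  assumes "CHAR('a::field) = 2" and "(z :: 'a) ^ 2 ^ k = z"
  shows "tr k z \<in> {0, 1}"
proof -
  have "tr k z ^ 2 = tr k (z ^ 2)"
    using tr_power_two_power_CHAR_2[OF assms(1), of k z 1] by simp
  also have "\<dots> = tr k z"
    using tr_square_add[of k z] assms(2) by simp
  finally show ?thesis by (simp add: square_eq_self_iff)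
qed

lemma choose_two_Suc: "Suc k choose 2 = (k choose 2) + k"
  by (simp add: numeral_2_eq_2)

lemma quadratic_sum_expansion:
  fixes Q :: "'a::comm_monoid_add \<Rightarrow> 'b::comm_ring_1" and B :: "'a \<Rightarrow> 'a \<Rightarrow> 'b"
  assumes polar: "\<And>x y. Q (x + y) = Q x + Q y + B x y"
    and additive: "\<And>x y z. B x (y + z) = B x y + B x z"
    and "Q 0 = 0" and "finite S"
    and off_diagonal: "\<And>i j. i \<in> S \<Longrightarrow> j \<in> S \<Longrightarrow> i \<noteq> j \<Longrightarrow> B (\<alpha> i) (\<alpha> j) = 1"
  shows "Q (\<Sum>i\<in>S. \<alpha> i) = (\<Sum>i\<in>S. Q (\<alpha> i)) + of_nat (card S choose 2)"
  using \<open>finite S\<close> off_diagonal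
proof (induction S rule: finite_induct)
  case (insert a F)
  have "B x 0 = 0" for x
    using additive[of x 0 0] by simp
  then have "B (\<alpha> a) (\<Sum>j\<in>F. \<alpha> j) = (\<Sum>j\<in>F. B (\<alpha> a) (\<alpha> j))"
    by (induction F rule: infinite_finite_induct) (simp_all add: additive)
  also have "\<dots> = (\<Sum>j\<in>F. 1)"
    using insert.hyps(2) insert.prems by (intro sum.cong refl) auto
  finally show ?case
    using insert by (simp add: polar choose_two_Suc algebra_simps)
qed (simp add: \<open>Q 0 = 0\<close> numeral_2_eq_2)

section \<open>Fields of order \<open>2 ^ n\<close> and the function \<open>Q\<close>\<close>

lemma sum_atLeast_1_lessThan_double:
  fixes c :: "nat \<Rightarrow> 'a::comm_monoid_add"
  assumes "1 \<le> m"
  shows "(\<Sum>d\<in>{1..<2 * m}. c d) = (\<Sum>d\<in>{1..<m}. c d + c (2 * m - d)) + c m"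
proof -
  have "(\<Sum>d\<in>{1..<2 * m}. c d) = (\<Sum>d\<in>{1..<m}. c d) + (\<Sum>d\<in>{m..<2 * m}. c d)"
    using assms by (simp add: sum.atLeastLessThan_concat)
  also have "(\<Sum>d\<in>{m..<2 * m}. c d) = c m + (\<Sum>d\<in>{Suc m..<2 * m}. c d)"
    using assms by (simp add: sum.atLeast_Suc_lessThan)
  also have "(\<Sum>d\<in>{Suc m..<2 * m}. c d) = (\<Sum>d\<in>{1..<m}. c (2 * m - d))"
    by (rule sum.reindex_bij_witness[of _ "\<lambda>d. 2 * m - d" "\<lambda>d. 2 * m - d"]) auto
  finally show ?thesis
    by (simp add: sum.distrib add_ac)
qed

lemma power_two_power_plus_one_add_CHAR_2:
  assumes "CHAR('a::field) = 2"
  shows "(x + y :: 'a) ^ (2 ^ d + 1)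
    = x ^ (2 ^ d + 1) + y ^ (2 ^ d + 1) + (x * y ^ 2 ^ d + y * x ^ 2 ^ d)"
  by (simp add: power_add power_two_power_add_CHAR_2[OF assms] algebra_simps)

definition quad_form :: "nat \<Rightarrow> 'a::field \<Rightarrow> 'a" where
  "quad_form n x = (\<Sum>i\<in>{1..<n div 2}. tr n (x ^ (2 ^ i + 1)))
                   + tr (n div 2) (x ^ (2 ^ (n div 2) + 1))"

lemma Qfun_eq_bitval_quad_form: "Qfun n x = bitval (quad_form n x)"
  by (simp add: Qfun_def quad_form_def)

context
  fixes n :: nat
  assumes card_UNIV: "card (UNIV :: 'a::{field,finite} set) = 2 ^ n"
begin

lemma CHAR_eq_2: "CHAR('a) = 2"
proof -
  have "prime CHAR('a)"
    by (simp add: finite_imp_CHAR_pos prime_CHAR_semidom)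
  moreover have "CHAR('a) dvd 2 ^ n"
    using CHAR_dvd_CARD[where ?'a = 'a] card_UNIV by simp
  ultimately show ?thesis
    by (metis prime_dvd_power_nat primes_dvd_imp_eq two_is_prime_nat)
qed

lemma card_exponent_pos: "0 < n"
proof -
  have "card {0, 1 :: 'a} \<le> card (UNIV :: 'a set)"
    by (rule card_mono) simp_all
  then show ?thesis
    using card_UNIV by (cases n) simp_all
qed

lemma power_two_power_eq_self: "(x :: 'a) ^ 2 ^ n = x"
  using power_card_UNIV_eq_self[of x] card_UNIV by simp

lemma tr_square_eq: "tr n ((z :: 'a) ^ 2) = tr n z"
  using tr_square_add[of n z] power_two_power_eq_self[of z] by simp

lemma tr_power_two_power_eq: "tr n ((z :: 'a) ^ 2 ^ j) = tr n z"
proof (induction j)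
  case (Suc j)
  have "z ^ 2 ^ Suc j = (z ^ 2 ^ j) ^ 2"
    by (simp flip: power_mult add: mult.commute)
  then show ?case
    using Suc tr_square_eq by simp
qed simp

lemma tr_zero_one: "tr n (z :: 'a) \<in> {0, 1}"
  by (rule tr_zero_one_if_fixed_CHAR_2[OF CHAR_eq_2 power_two_power_eq_self])

lemma tr_mult_power_swap:
  assumes "d \<le> n"
  shows "tr n ((y :: 'a) * x ^ 2 ^ d) = tr n (x * y ^ 2 ^ (n - d))"
proof -
  have "(y * x ^ 2 ^ d) ^ 2 ^ (n - d) = y ^ 2 ^ (n - d) * x ^ (2 ^ d * 2 ^ (n - d))"
    by (simp add: power_mult_distrib power_mult)
  also have "2 ^ d * 2 ^ (n - d) = (2 :: nat) ^ n"
    using assms by (simp flip: power_add)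
  finally show ?thesis
    using tr_power_two_power_eq[of "y * x ^ 2 ^ d" "n - d"]
    by (simp add: power_two_power_eq_self mult.commute)
qed

lemma sum_tr_mult_power_eq: "(\<Sum>d<n. tr n ((x :: 'a) * y ^ 2 ^ d)) = tr n x * tr n y"
proof -
  have "(\<Sum>d<n. tr n (x * y ^ 2 ^ d)) = tr n (tr n y * x)"
    by (simp add: tr_def[of n y] tr_sum_CHAR_2[OF CHAR_eq_2] sum_distrib_left mult.commute)
  also have "\<dots> = tr n y * tr n x"
    by (rule tr_mult_zero_one[OF tr_zero_one])
  finally show ?thesis
    by (simp add: mult.commute)
qed

lemma sum_tr_cross_terms:
  "(\<Sum>d\<in>{1..<n}. tr n ((x :: 'a) * y ^ 2 ^ d)) = tr n x * tr n y + tr n (x * y)"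
proof -
  have "(\<Sum>d<n. tr n (x * y ^ 2 ^ d)) = tr n (x * y) + (\<Sum>d\<in>{1..<n}. tr n (x * y ^ 2 ^ d))"
    using card_exponent_pos by (simp add: lessThan_atLeast0 sum.atLeast_Suc_lessThan)
  then show ?thesis
    using sum_tr_mult_power_eq[of x y] add_self_CHAR_2[OF CHAR_eq_2]
    by (metis add.assoc add.commute add_0)
qed

lemma power_half_exponent_swap:
  assumes "n = 2 * m"
  shows "((x :: 'a) * y ^ 2 ^ m) ^ 2 ^ m = y * x ^ 2 ^ m"
proof -
  have "(x * y ^ 2 ^ m) ^ 2 ^ m = x ^ 2 ^ m * y ^ (2 ^ m * 2 ^ m)"
    by (simp add: power_mult_distrib power_mult)
  also have "2 ^ m * 2 ^ m = (2 :: nat) ^ n"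
    using assms by (simp flip: power_add add: mult_2)
  finally show ?thesis
    by (simp add: power_two_power_eq_self mult.commute)
qed

lemma tr_half_cross_terms:
  assumes "n = 2 * m"
  shows "tr m ((x :: 'a) * y ^ 2 ^ m) + tr m (y * x ^ 2 ^ m) = tr n (x * y ^ 2 ^ m)"
  using tr_add_exponent[of m m "x * y ^ 2 ^ m"] assms
  by (simp add: power_half_exponent_swap mult_2)

lemma quad_form_zero_one:
  assumes "even n"
  shows "quad_form n (x :: 'a) \<in> {0, 1}"
proof -
  obtain m where n: "n = 2 * m"
    using assms by blast
  have "(x ^ (2 ^ m + 1)) ^ 2 ^ m = x ^ (2 ^ m + 1)"
    using power_half_exponent_swap[OF n, of x x] by (simp add: power_add mult.commute)
  then have "tr m (x ^ (2 ^ m + 1)) \<in> {0, 1}"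
    by (rule tr_zero_one_if_fixed_CHAR_2[OF CHAR_eq_2])
  moreover have "(\<Sum>i\<in>{1..<m}. tr n (x ^ (2 ^ i + 1))) \<in> {0, 1}"
    by (rule zero_one_sum_closed_CHAR_2[OF CHAR_eq_2 tr_zero_one])
  moreover have "quad_form n x = (\<Sum>i\<in>{1..<m}. tr n (x ^ (2 ^ i + 1))) + tr m (x ^ (2 ^ m + 1))"
    using n by (simp add: quad_form_def)
  ultimately show ?thesis
    using zero_one_add_closed_CHAR_2[OF CHAR_eq_2] by simp
qed

(* Since Tr(y x^(2^d)) = Tr(x y^(2^(n-d))), the cross terms of the summands d < m together with the
   two halves of the middle term run over all Tr(x y^(2^d)) with 0 < d < n. *)
lemma quad_form_add:
  assumes "even n"
  shows "quad_form n ((x :: 'a) + y)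
    = quad_form n x + quad_form n y + (tr n x * tr n y + tr n (x * y))"
proof -
  obtain m where n: "n = 2 * m"
    using assms by blast
  then have "1 \<le> m"
    using card_exponent_pos by simp
  define c where "c d = tr n (x * y ^ 2 ^ d)" for d
  have "tr n ((x + y) ^ (2 ^ d + 1))
      = tr n (x ^ (2 ^ d + 1)) + tr n (y ^ (2 ^ d + 1)) + (c d + c (2 * m - d))"
    if "d < m" for d
    unfolding power_two_power_plus_one_add_CHAR_2[OF CHAR_eq_2] tr_add_CHAR_2[OF CHAR_eq_2]
    using that n tr_mult_power_swap[of d y x] by (simp add: c_def)
  then have "(\<Sum>d\<in>{1..<m}. tr n ((x + y) ^ (2 ^ d + 1)))
      = (\<Sum>d\<in>{1..<m}. tr n (x ^ (2 ^ d + 1))) + (\<Sum>d\<in>{1..<m}. tr n (y ^ (2 ^ d + 1)))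
        + (\<Sum>d\<in>{1..<m}. c d + c (2 * m - d))"
    by (simp add: sum.distrib)
  moreover have "tr m ((x + y) ^ (2 ^ m + 1))
      = tr m (x ^ (2 ^ m + 1)) + tr m (y ^ (2 ^ m + 1)) + c m"
    unfolding power_two_power_plus_one_add_CHAR_2[OF CHAR_eq_2] tr_add_CHAR_2[OF CHAR_eq_2]
    using tr_half_cross_terms[OF n, of x y] by (simp add: c_def add.assoc)
  moreover have "(\<Sum>d\<in>{1..<m}. c d + c (2 * m - d)) + c m = tr n x * tr n y + tr n (x * y)"
    using sum_atLeast_1_lessThan_double[OF \<open>1 \<le> m\<close>, of c] sum_tr_cross_terms[of x y] n
    by (simp add: c_def)
  ultimately show ?thesis
    using n by (simp add: quad_form_def algebra_simps)
qed

end

section \<open>Walsh transforms and sums of two squares\<close>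

lemma sgn2_xor: "sgn2 (a \<noteq> b) = sgn2 a * sgn2 b"
  by (simp add: sgn2_def)

lemma sgn2_odd: "sgn2 (odd k) = (-1) ^ k"
  by (simp add: sgn2_def)

lemma i_power_eq:
  "\<i> ^ w = (-1) ^ (w choose 2) * ((1 + \<i>) / 2 + (1 - \<i>) / 2 * (-1) ^ w)"
proof (induction w)
  case (Suc w)
  have "Suc w choose 2 = (w choose 2) + w"
    by (simp add: numeral_2_eq_2)
  then show ?case
    using Suc by (cases "even w") (simp_all add: power_add field_simps)
qed (simp add: numeral_2_eq_2 add_divide_distrib[symmetric])

definition walsh :: "nat \<Rightarrow> ('a::field \<Rightarrow> bool) \<Rightarrow> 'a \<Rightarrow> int" where
  "walsh n g \<nu> = (\<Sum>x\<in>UNIV. if g x \<noteq> bitval (tr n (\<nu> * x)) then -1 else 1)"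

lemma sum_sgn2_eq_walsh:
  "(\<Sum>x\<in>UNIV. sgn2 (g x \<noteq> bitval (tr n (\<nu> * x)))) = of_int (walsh n g \<nu>)"
  unfolding walsh_def of_int_sum by (intro sum.cong) (simp_all add: sgn2_def)

lemma bent_iff_walsh: "bent n g \<longleftrightarrow> (\<forall>\<nu>. \<bar>walsh n g \<nu>\<bar> = 2 ^ (n div 2))"
proof -
  have "cmod (of_int k) = 2 ^ j \<longleftrightarrow> \<bar>k\<bar> = 2 ^ j" for k :: int and j :: nat
    using of_int_eq_iff[of "\<bar>k\<bar>" "2 ^ j", where 'a = real] by simp
  then show ?thesis
    unfolding bent_def sum_sgn2_eq_walsh by simp
qed

lemma int_square_mod_4: "(a :: int) ^ 2 mod 4 = (if even a then 0 else 1)"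
proof (cases "even a")
  case True
  then obtain c where "a = 2 * c" by blast
  then show ?thesis by (simp add: power2_eq_square)
next
  case False
  then obtain c where "a = 2 * c + 1" by (blast elim: oddE)
  then have "a ^ 2 = 4 * (c ^ 2 + c) + 1"
    by (simp add: power2_eq_square algebra_simps)
  then have "a ^ 2 mod 4 = 1"
    by (simp only: mod_mult_self4) simp
  then show ?thesis
    using False by simp
qed

lemma sum_squares_mod_4:
  "((a :: int) ^ 2 + b ^ 2) mod 4 = (if even a then 0 else 1) + (if even b then 0 else 1)"
proof -
  have "(a ^ 2 + b ^ 2) mod 4 = (a ^ 2 mod 4 + b ^ 2 mod 4) mod 4"
    by (rule mod_add_eq[symmetric])
  then show ?thesis
    by (simp add: int_square_mod_4)
qed

lemma sum_two_squares_eq_imp: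
  "(a :: int) ^ 2 + b ^ 2 = 2 * 4 ^ k \<Longrightarrow> a ^ 2 = 4 ^ k"
proof (induction k arbitrary: a b)
  case 0
  then have "odd a" and "odd b"
    using sum_squares_mod_4[of a b] by (simp_all split: if_splits)
  then have "a \<noteq> 0" and "b \<noteq> 0"
    by auto
  then have "1 \<le> a ^ 2" and "1 \<le> b ^ 2"
    by (simp_all add: int_one_le_iff_zero_less)
  then show ?case
    using "0.prems" by simp
next
  case (Suc k)
  then have "even a" and "even b"
    using sum_squares_mod_4[of a b] by (simp_all split: if_splits)
  then obtain a' b' where ab: "a = 2 * a'" "b = 2 * b'"
    by blast
  then have "a' ^ 2 + b' ^ 2 = 2 * 4 ^ k"
    using Suc.prems by (simp add: power_mult_distrib)
  then show ?case
    using Suc.IH ab by (simp add: power_mult_distrib)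
qed

lemma sum_two_squares_eq_iff:
  "(a :: int) ^ 2 + b ^ 2 = 2 * 4 ^ k \<longleftrightarrow> \<bar>a\<bar> = 2 ^ k \<and> \<bar>b\<bar> = 2 ^ k"
proof -
  have abs_eq: "\<bar>c\<bar> = 2 ^ k \<longleftrightarrow> c ^ 2 = 4 ^ k" for c :: int
  proof -
    have "\<bar>c\<bar> = 2 ^ k \<longleftrightarrow> \<bar>c\<bar> ^ 2 = (2 ^ k) ^ 2"
      by (rule power2_eq_iff_nonneg[symmetric]) simp_all
    moreover have "(2 ^ k) ^ 2 = (4 :: int) ^ k"
      by (simp add: power2_eq_square flip: power_mult_distrib)
    ultimately show ?thesis
      by simp
  qed
  show ?thesis
    using sum_two_squares_eq_imp[of a b k] sum_two_squares_eq_imp[of b a k]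
    by (auto simp: abs_eq add.commute)
qed

lemma cmod_combination_eq_power_iff:
  "cmod ((1 + \<i>) / 2 * of_int a + (1 - \<i>) / 2 * of_int b) = 2 ^ k
    \<longleftrightarrow> a ^ 2 + b ^ 2 = 2 * 4 ^ k"
proof -
  define z where "z = (1 + \<i>) / 2 * of_int a + (1 - \<i>) / 2 * of_int b"
  have Re: "Re z = (a + b) / 2" and Im: "Im z = (a - b) / 2"
    by (simp_all add: z_def field_simps)
  have "cmod z ^ 2 = ((a + b) / 2) ^ 2 + ((a - b) / 2) ^ 2"
    by (simp only: cmod_power2 Re Im)
  also have "\<dots> = (a ^ 2 + b ^ 2) / 2"
    by (simp add: power2_eq_square field_simps)
  finally have square: "cmod z ^ 2 = (a ^ 2 + b ^ 2) / 2" .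
  have "cmod z = 2 ^ k \<longleftrightarrow> cmod z ^ 2 = (2 ^ k) ^ 2"
    by (rule power2_eq_iff_nonneg[symmetric]) simp_all
  also have "\<dots> \<longleftrightarrow> (a ^ 2 + b ^ 2) / 2 = 4 ^ k"
    by (simp only: square) (simp add: power2_eq_square flip: power_mult_distrib)
  also have "\<dots> \<longleftrightarrow> real_of_int (a ^ 2 + b ^ 2) = real_of_int (2 * 4 ^ k)"
    by (simp add: mult.commute)
  finally show ?thesis
    by (simp only: z_def of_int_eq_iff)
qed

section \<open>Coordinates in a self-dual basis\<close>

locale self_dual_basis_field =
  fixes n :: nat and \<alpha> :: "nat \<Rightarrow> 'a::{field,finite}"
  assumes card_UNIV: "card (UNIV :: 'a set) = 2 ^ n"
    and self_dual: "self_dual_basis n \<alpha>"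
begin

lemmas CHAR_eq_2 = CHAR_eq_2[OF card_UNIV]
  and tr_zero_one = tr_zero_one[OF card_UNIV]

lemma tr_add: "tr n ((x :: 'a) + y) = tr n x + tr n y"
  by (rule tr_add_CHAR_2[OF CHAR_eq_2])

lemma tr_basis_mult: "i < n \<Longrightarrow> j < n \<Longrightarrow> tr n (\<alpha> i * \<alpha> j) = (if i = j then 1 else 0)"
  using self_dual by (simp add: self_dual_basis_def)

lemma tr_basis: "i < n \<Longrightarrow> tr n (\<alpha> i) = 1"
  using tr_basis_mult[of i i] tr_square_eq[OF card_UNIV, of "\<alpha> i"] by (simp add: power2_eq_square)

lemma tr_basis_mult_sum:
  assumes "j < n" and "S \<subseteq> {..<n}"
  shows "tr n (\<alpha> j * (\<Sum>i\<in>S. \<alpha> i)) = (if j \<in> S then 1 else 0)"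
proof -
  have "tr n (\<alpha> j * (\<Sum>i\<in>S. \<alpha> i)) = (\<Sum>i\<in>S. if j = i then 1 else 0)"
    using assms
    by (auto simp: sum_distrib_left tr_sum_CHAR_2[OF CHAR_eq_2] tr_basis_mult intro!: sum.cong)
  then show ?thesis
    using assms finite_subset[of S "{..<n}"] by simp
qed

lemma ex_subset_sum_basis: "\<exists>S \<subseteq> {..<n}. x = (\<Sum>i\<in>S. \<alpha> i)"
proof -
  let ?\<psi> = "\<lambda>S. \<Sum>i\<in>S. \<alpha> i"
  have "inj_on ?\<psi> (Pow {..<n})"
  proof (rule inj_onI)
    fix S T assume "S \<in> Pow {..<n}" and "T \<in> Pow {..<n}" and "?\<psi> S = ?\<psi> T"
    then show "S = T"
      using tr_basis_mult_sum[of _ S] tr_basis_mult_sum[of _ T]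
      by (metis PowD lessThan_iff one_neq_zero subset_antisym subsetI subset_iff)
  qed
  then have "card (?\<psi> ` Pow {..<n}) = card (UNIV :: 'a set)"
    by (simp add: card_image card_Pow card_UNIV)
  then have "?\<psi> ` Pow {..<n} = UNIV"
    by (simp add: card_subset_eq)
  then show ?thesis
    by (metis PowD UNIV_I imageE)
qed

definition support :: "'a \<Rightarrow> nat set" where
  "support x = {i. i < n \<and> tr n (\<alpha> i * x) \<noteq> 0}"

lemma wt_eq_card_support: "wt n \<alpha> x = card (support x)"
  by (simp add: wt_def support_def)

lemma finite_support: "finite (support x)"
  by (simp add: support_def)

lemma support_subset: "support x \<subseteq> {..<n}"
  by (auto simp: support_def)

lemma sum_basis_support: "(\<Sum>i\<in>support x. \<alpha> i) = x"
proof -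
  obtain S where S: "S \<subseteq> {..<n}" and x: "x = (\<Sum>i\<in>S. \<alpha> i)"
    using ex_subset_sum_basis by blast
  have "i \<in> support x \<longleftrightarrow> i \<in> S" for i
    using S tr_basis_mult_sum[OF _ S, of i] unfolding support_def x by (cases "i < n") auto
  then have "support x = S"
    by blast
  then show ?thesis
    using x by simp
qed

lemma tr_basis_mult_support:
  assumes "i < n"
  shows "tr n (\<alpha> i * x) = (if i \<in> support x then 1 else 0)"
proof -
  have "tr n (\<alpha> i * x) = tr n (\<alpha> i * (\<Sum>j\<in>support x. \<alpha> j))"
    by (simp only: sum_basis_support)
  also have "\<dots> = (if i \<in> support x then 1 else 0)"
    by (rule tr_basis_mult_sum[OF assms support_subset])
  finally show ?thesis .
qed

definition lin_part :: 'a where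
  "lin_part = (\<Sum>i<n. quad_form n (\<alpha> i) * \<alpha> i)"

definition all_ones :: 'a where
  "all_ones = (\<Sum>i<n. \<alpha> i)"

lemma sum_lessThan_if_support: "(\<Sum>i<n. if i \<in> support x then f i else 0) = (\<Sum>i\<in>support x. f i)"
  by (simp add: sum.If_cases support_def Int_def conj_commute)

lemma tr_all_ones_mult: "tr n (all_ones * x) = of_nat (wt n \<alpha> x)"
  by (simp add: all_ones_def sum_distrib_right tr_sum_CHAR_2[OF CHAR_eq_2] tr_basis_mult_support
      sum_lessThan_if_support wt_eq_card_support)

lemma tr_lin_part_mult:
  assumes "even n"
  shows "tr n (lin_part * x) = (\<Sum>i\<in>support x. quad_form n (\<alpha> i))"
proof -
  have "tr n (lin_part * x) = (\<Sum>i<n. quad_form n (\<alpha> i) * tr n (\<alpha> i * x))"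
    by (simp add: lin_part_def sum_distrib_right tr_sum_CHAR_2[OF CHAR_eq_2] mult.assoc
        tr_mult_zero_one[OF quad_form_zero_one[OF card_UNIV assms]])
  then show ?thesis
    by (simp add: tr_basis_mult_support if_distrib sum_lessThan_if_support cong: if_cong)
qed

lemma quad_form_eq:
  assumes "even n"
  shows "quad_form n x = tr n (lin_part * x) + of_nat (wt n \<alpha> x choose 2)"
proof -
  have "quad_form n (\<Sum>i\<in>support x. \<alpha> i)
      = (\<Sum>i\<in>support x. quad_form n (\<alpha> i)) + of_nat (card (support x) choose 2)"
  proof (rule quadratic_sum_expansion[where B = "\<lambda>x y :: 'a. tr n x * tr n y + tr n (x * y)"])
    show "quad_form n (x + y) = quad_form n x + quad_form n y + (tr n x * tr n y + tr n (x * y))"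
      for x y :: 'a
      by (rule quad_form_add[OF card_UNIV assms])
    show "tr n x * tr n (y + z) + tr n (x * (y + z))
        = tr n x * tr n y + tr n (x * y) + (tr n x * tr n z + tr n (x * z))" for x y z :: 'a
      by (simp add: tr_add distrib_left)
    show "quad_form n 0 = 0"
      by (simp add: quad_form_def power_0_left)
    show "tr n (\<alpha> i) * tr n (\<alpha> j) + tr n (\<alpha> i * \<alpha> j) = 1"
      if "i \<in> support x" and "j \<in> support x" and "i \<noteq> j" for i j
      using that by (simp add: support_def tr_basis tr_basis_mult)
  qed (rule finite_support)
  then show ?thesis
    by (simp add: sum_basis_support tr_lin_part_mult[OF assms] wt_eq_card_support)
qed

lemma i_power_wt:
  assumes "even n"
  shows "\<i> ^ wt n \<alpha> x = sgn2 (Qfun n x \<noteq> bitval (tr n (lin_part * x)))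
    * ((1 + \<i>) / 2 + (1 - \<i>) / 2 * sgn2 (bitval (tr n (all_ones * x))))"
proof -
  define w where "w = wt n \<alpha> x"
  have "(of_nat (w choose 2) :: 'a) \<in> {0, 1}"
    by (simp add: of_nat_CHAR_2[OF CHAR_eq_2])
  then have "Qfun n x \<longleftrightarrow> bitval (tr n (lin_part * x)) \<noteq> odd (w choose 2)"
    unfolding Qfun_eq_bitval_quad_form quad_form_eq[OF assms] w_def
    by (simp add: bitval_add_CHAR_2[OF CHAR_eq_2 tr_zero_one] bitval_of_nat_CHAR_2[OF CHAR_eq_2])
  then have Q: "(Qfun n x \<noteq> bitval (tr n (lin_part * x))) = odd (w choose 2)"
    by blast
  have E: "bitval (tr n (all_ones * x)) = odd w"
    by (simp add: tr_all_ones_mult bitval_of_nat_CHAR_2[OF CHAR_eq_2] w_def)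
  show ?thesis
    unfolding Q E sgn2_odd w_def[symmetric] by (rule i_power_eq)
qed

lemma bitval_tr_add_mult:
  fixes \<mu> \<nu> x :: 'a
  shows "bitval (tr n ((\<mu> + \<nu>) * x)) \<longleftrightarrow> bitval (tr n (\<mu> * x)) \<noteq> bitval (tr n (\<nu> * x))"
  unfolding distrib_right tr_add by (rule bitval_add_CHAR_2[OF CHAR_eq_2 tr_zero_one tr_zero_one])

lemma negabent_sum_eq:
  assumes "even n"
  shows "(\<Sum>x\<in>UNIV. sgn2 (h x \<noteq> bitval (tr n (\<mu> * x))) * \<i> ^ wt n \<alpha> x)
    = (1 + \<i>) / 2 * of_int (walsh n (\<lambda>x. h x \<noteq> Qfun n x) (\<mu> + lin_part))
      + (1 - \<i>) / 2 * of_int (walsh n (\<lambda>x. h x \<noteq> Qfun n x) (\<mu> + lin_part + all_ones))"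
  unfolding sum_sgn2_eq_walsh[symmetric] sum_distrib_left sum.distrib[symmetric]
  unfolding i_power_wt[OF assms] bitval_tr_add_mult sgn2_xor
  by (intro sum.cong refl) (simp add: algebra_simps)

lemma negabent_sum_cmod_iff:
  assumes "even n"
  shows "cmod (\<Sum>x\<in>UNIV. sgn2 (h x \<noteq> bitval (tr n (\<mu> * x))) * \<i> ^ wt n \<alpha> x) = 2 ^ (n div 2)
    \<longleftrightarrow> \<bar>walsh n (\<lambda>x. h x \<noteq> Qfun n x) (\<mu> + lin_part)\<bar> = 2 ^ (n div 2)
      \<and> \<bar>walsh n (\<lambda>x. h x \<noteq> Qfun n x) (\<mu> + lin_part + all_ones)\<bar> = 2 ^ (n div 2)"
  unfolding negabent_sum_eq[OF assms] cmod_combination_eq_power_iff sum_two_squares_eq_iff ..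

end

theorem theorem7:
  fixes n :: nat and \<alpha> :: "nat \<Rightarrow> 'a::{field,finite}" and f :: "'a \<Rightarrow> bool"
  assumes "even n" and "n \<ge> 2" and "card (UNIV :: 'a set) = 2 ^ n"
    and "self_dual_basis n \<alpha>"
  shows "(bent n f \<longrightarrow> negabent n \<alpha> (\<lambda>x. f x \<noteq> Qfun n x))
       \<and> (negabent n \<alpha> f \<longrightarrow> bent n (\<lambda>x. f x \<noteq> Qfun n x))"
proof -
  interpret self_dual_basis_field n \<alpha>
    using assms(3,4) by unfold_locales
  have "negabent n \<alpha> (\<lambda>x. f x \<noteq> Qfun n x)" if "bent n f"
    unfolding negabent_def
  proof
    fix \<mu>
    have "(\<lambda>x. (f x \<noteq> Qfun n x) \<noteq> Qfun n x) = f"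
      by auto
    then show "cmod (\<Sum>x\<in>UNIV. sgn2 ((f x \<noteq> Qfun n x) \<noteq> bitval (tr n (\<mu> * x))) * \<i> ^ wt n \<alpha> x)
        = 2 ^ (n div 2)"
      using that negabent_sum_cmod_iff[OF assms(1), of "\<lambda>x. f x \<noteq> Qfun n x" \<mu>]
      by (simp add: bent_iff_walsh)
  qed
  moreover have "bent n (\<lambda>x. f x \<noteq> Qfun n x)" if "negabent n \<alpha> f"
    unfolding bent_iff_walsh
  proof
    fix \<nu>
    have "\<nu> + lin_part + lin_part = \<nu>"
      by (simp add: add.assoc add_self_CHAR_2[OF CHAR_eq_2])
    then show "\<bar>walsh n (\<lambda>x. f x \<noteq> Qfun n x) \<nu>\<bar> = 2 ^ (n div 2)"
      using that negabent_sum_cmod_iff[OF assms(1), of f "\<nu> + lin_part"]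
      unfolding negabent_def by auto
  qed
  ultimately show ?thesis
    by blast
qed

end
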